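(* Let $m\ge n$ be positive integers and set $$A_{m,n}=\sum_{i,j\ge1}p_{i+j}\,Q_{m-i}(\alpha)\,Q_{n-j}(\alpha)=\sum_\lambda b_\lambda q_\lambda(\alpha).$$ Then $b_\lambda=\big[m'(1-\delta_{m,m'})-n'\big]\alpha$ if $\lambda=(m',n')$ is a partition with at most two parts (with $n'\ge0$) satisfying $\lambda\ge(m,n)$ in dominance order, and $b_\lambda=0$ otherwise.
   Context: $F=\mathbb{Q}(\alpha)$, $\Lambda_F=F[p_1,p_2,\dots]$ with $p_n$ the power sums. For a partition $\lambda$, $l(\lambda)$ is its number of parts and $z_\lambda=\prod_i i^{m_i}m_i!$ with $m_i$ the multiplicity of $i$. $Q_n(\alpha)=\sum_{\lambda\vdash n}\alpha^{-l(\lambda)}z_\lambda^{-1}p_\lambda$ for $n\ge1$, $Q_0=1$, $Q_n=0$ for $n<0$; $q_\lambda=Q_{\lambda_1}Q_{\lambda_2}\cdots$ (a basis of $\Lambda_F$). Dominance order: $\lambda\ge\mu$ iff $|\lambda|=|\mu|$ and $\lambda_1+\dots+\lambda_i\ge\mu_1+\dots+\mu_i$ for all $i$. (In the paper $A_{m,n}$ is written as $\sum_{i,j\ge1}h_{-(i+j)}(h_i.Q_m)(h_j.Q_n)$ with $h_{-k}$ multiplication by $p_k$ and $h_k=k\alpha\,\partial/\partial p_k$, which satisfy $h_i.Q_m=Q_{m-i}$.) *)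

theory Defs
  imports Main "HOL-Library.Poly_Mapping" "HOL-Computational_Algebra.Polynomial"
    "HOL-Computational_Algebra.Fraction_Field"
begin

type_synonym F = "rat poly fract"

definition alpha :: F where
  "alpha = Fract [:0, 1:] 1"

text \<open>Lambda_F = F[p_1, p_2, ...]: polynomials in countably many variables p_k,
  monomials are finitely supported exponent vectors (finitely supported nat to nat maps).\<close>
type_synonym Lam = "(nat \<Rightarrow>\<^sub>0 nat) \<Rightarrow>\<^sub>0 F"

definition const :: "F \<Rightarrow> Lam" where
  "const c = Poly_Mapping.single 0 c"

definition p :: "nat \<Rightarrow> Lam" where
  "p k = Poly_Mapping.single (Poly_Mapping.single k 1) 1"

definition partitions :: "nat \<Rightarrow> nat list set" where
  "partitions N = {ls. sorted_wrt (\<ge>) ls \<and> (\<forall>x\<in>set ls. 0 < x) \<and> sum_list ls = N}"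

definition p_part :: "nat list \<Rightarrow> Lam" where
  "p_part lam = prod_list (map p lam)"

definition z :: "nat list \<Rightarrow> nat" where
  "z lam = (\<Prod>i\<in>set lam. i ^ count_list lam i * fact (count_list lam i))"

definition Q :: "int \<Rightarrow> Lam" where
  "Q k = (if k < 0 then 0 else if k = 0 then 1 else
     (\<Sum>lam\<in>partitions (nat k).
        const (inverse (alpha ^ length lam) / of_nat (z lam)) * p_part lam))"

definition q :: "nat list \<Rightarrow> Lam" where
  "q lam = prod_list (map (\<lambda>k. Q (int k)) lam)"

text \<open>Dominance order on partitions (trailing zeros irrelevant).\<close>
definition dominates :: "nat list \<Rightarrow> nat list \<Rightarrow> bool" where
  "dominates lam mu \<longleftrightarrow> sum_list lam = sum_list mu \<and>
     (\<forall>i. sum_list (take i mu) \<le> sum_list (take i lam))"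

text \<open>A_{m,n}; terms with i > m or j > n vanish since Q_k = 0 for k < 0.\<close>
definition A :: "nat \<Rightarrow> nat \<Rightarrow> Lam" where
  "A m n = (\<Sum>i\<in>{1..m}. \<Sum>j\<in>{1..n}. p (i + j) * Q (int m - int i) * Q (int n - int j))"

text \<open>The claimed coefficient b_lambda; lambda = (m', n') with n' = 0 allowed.\<close>
definition b :: "nat \<Rightarrow> nat \<Rightarrow> nat list \<Rightarrow> F" where
  "b m n lam = (if length lam \<le> 2 \<and> dominates lam [m, n] then
     (let m' = (lam @ [0, 0]) ! 0; n' = (lam @ [0, 0]) ! 1 in
       (of_nat m' * (if m = m' then 0 else 1) - of_nat n') * alpha)
     else 0)"

end

theory Submission
  imports Defs "HOL-Library.Multiset"
begin

text \<open>
  Q_N is the coefficient of t^N in exp (\<Sum>_k p_k t^k / (\<alpha> k)), so it satisfies Newton's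
  recurrence \<Sum>_{k \<ge> 1} p_k Q_{N-k} = \<alpha> N Q_N. On the defining sum over partitions this is
  a bijection: deleting a part k from \<lambda> multiplies \<alpha>^{-l(\<lambda>)} / z_\<lambda> by \<alpha> k m_k(\<lambda>),
  and \<Sum>_k k m_k(\<lambda>) = N.

  Regard A_{a,b} = \<Sum>_{i,j \<ge> 1} p_{i+j} Q_{a-i} Q_{b-j} as defined for all integers a, b.
  Applying the recurrence once in each index gives
  A_{a,b} - A_{a+1,b-1} = \<alpha> (a+1) Q_{a+1} Q_{b-1} - \<alpha> b Q_a Q_b. Telescoping from (m, n) to
  (m + n, 0), where A vanishes, expresses A_{m,n} through the products
  Q_{m+r} Q_{n-r} = q_{(m+r, n-r)}, 0 \<le> r \<le> n; these are exactly the q_\<lambda> for the partitions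
  \<lambda> \<ge> (m, n) with at most two parts.
\<close>

lemma alpha_nonzero: "alpha \<noteq> 0"
  unfolding alpha_def by (simp add: Zero_fract_def eq_fract)

lemma of_nat_F_eq_0_iff: "(of_nat k :: F) = 0 \<longleftrightarrow> k = 0"
  by (simp add: of_nat_fract Zero_fract_def eq_fract)

lemma const_0 [simp]: "const 0 = 0"
  unfolding const_def by simp

lemma const_1 [simp]: "const 1 = 1"
  unfolding const_def by simp

lemma const_add: "const (x + y) = const x + const y"
  unfolding const_def by (simp add: single_add)

lemma const_diff: "const (x - y) = const x - const y"
  unfolding const_def by (simp add: single_diff)

lemma const_mult: "const (x * y) = const x * const y"
  unfolding const_def by (simp add: mult_single)

lemma const_sum: "const (sum f S) = (\<Sum>x\<in>S. const (f x))"
  by (induction S rule: infinite_finite_induct) (auto simp: const_add)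

lemma partitions_iff:
  "lam \<in> partitions N \<longleftrightarrow> sorted_wrt (\<ge>) lam \<and> 0 \<notin> set lam \<and> sum_list lam = N"
  unfolding partitions_def by (auto intro!: gr0I)

lemma partitions_0: "partitions 0 = {[]}"
  by (auto simp: partitions_iff) (metis list.set_sel(1))

lemma finite_partitions: "finite (partitions N)"
proof -
  have "length lam \<le> sum_list lam" if "0 \<notin> set lam" for lam :: "nat list"
    using that by (induction lam) (auto simp: Suc_le_eq)
  then have "partitions N \<subseteq> {xs. set xs \<subseteq> {..N} \<and> length xs \<le> N}"
    using member_le_sum_list by (fastforce simp: partitions_iff)
  then show ?thesis
    by (rule finite_subset) (rule finite_lists_length_le, simp)
qed

lemma sorted_wrt_ge_mset_eq:
  fixes xs ys :: "'a::linorder list"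
  assumes "sorted_wrt (\<ge>) xs" "sorted_wrt (\<ge>) ys" "mset xs = mset ys"
  shows "xs = ys"
proof -
  have "sort (rev ys) = rev xs"
    using assms by (intro properties_for_sort) (simp_all add: sorted_wrt_rev)
  moreover have "sort (rev ys) = rev ys"
    using assms by (intro properties_for_sort) (simp_all add: sorted_wrt_rev)
  ultimately show ?thesis by simp
qed

lemma sorted_wrt_remove1: "sorted_wrt P xs \<Longrightarrow> sorted_wrt P (remove1 x xs)"
  by (induction xs) (auto dest: subsetD[OF set_remove1_subset])

definition insert_part :: "nat \<Rightarrow> nat list \<Rightarrow> nat list" where
  "insert_part k mu = rev (insort k (rev mu))"

lemma sorted_insert_part: "sorted_wrt (\<ge>) mu \<Longrightarrow> sorted_wrt (\<ge>) (insert_part k mu)"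
  unfolding insert_part_def by (simp add: sorted_wrt_rev sorted_insort)

lemma mset_insert_part [simp]: "mset (insert_part k mu) = add_mset k (mset mu)"
  unfolding insert_part_def by simp

lemma set_insert_part [simp]: "set (insert_part k mu) = insert k (set mu)"
  by (metis mset_insert_part set_mset_mset set_mset_add_mset_insert)

lemma remove1_insert_part: "sorted_wrt (\<ge>) mu \<Longrightarrow> remove1 k (insert_part k mu) = mu"
  by (rule sorted_wrt_ge_mset_eq) (auto intro: sorted_wrt_remove1 sorted_insert_part)

lemma insert_part_remove1:
  "sorted_wrt (\<ge>) lam \<Longrightarrow> k \<in> set lam \<Longrightarrow> insert_part k (remove1 k lam) = lam"
  by (rule sorted_wrt_ge_mset_eq) (auto intro: sorted_wrt_remove1 sorted_insert_part)

lemma insert_part_in_partitions: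
  assumes "mu \<in> partitions (N - k)" "1 \<le> k" "k \<le> N"
  shows "insert_part k mu \<in> partitions N"
proof -
  have "sum_list (insert_part k mu) = k + sum_list mu"
    by (simp flip: sum_mset_sum_list)
  then show ?thesis
    using assms by (auto simp: partitions_iff sorted_insert_part)
qed

lemma remove1_in_partitions:
  assumes "lam \<in> partitions N" "k \<in> set lam"
  shows "remove1 k lam \<in> partitions (N - k)"
proof -
  have "sum_list lam = k + sum_list (remove1 k lam)"
    using assms(2) by (simp add: sum_list_map_remove1[where f = "\<lambda>x. x", simplified])
  then show ?thesis
    using assms
    by (auto simp: partitions_iff sorted_wrt_remove1 dest: subsetD[OF set_remove1_subset])
qed

lemma bij_betw_insert_part:
  "bij_betw (\<lambda>(k, mu). (insert_part k mu, k))
     (SIGMA k:{1..N}. partitions (N - k)) (SIGMA lam:partitions N. set lam)"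
proof (rule bij_betw_byWitness[where f' = "\<lambda>(lam, k). (k, remove1 k lam)"])
  show "(\<lambda>(k, mu). (insert_part k mu, k)) ` (SIGMA k:{1..N}. partitions (N - k))
      \<subseteq> (SIGMA lam:partitions N. set lam)"
    by (auto intro: insert_part_in_partitions)
  have "1 \<le> k \<and> k \<le> N" if "lam \<in> partitions N" "k \<in> set lam" for lam k
    using that member_le_sum_list[of k lam] by (auto simp: partitions_iff Suc_le_eq intro!: gr0I)
  then show "(\<lambda>(lam, k). (k, remove1 k lam)) ` (SIGMA lam:partitions N. set lam)
      \<subseteq> (SIGMA k:{1..N}. partitions (N - k))"
    by (auto intro: remove1_in_partitions)
next
  show "\<forall>a\<in>SIGMA k:{1..N}. partitions (N - k).
      (\<lambda>(lam, k). (k, remove1 k lam)) ((\<lambda>(k, mu). (insert_part k mu, k)) a) = a"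
    by (clarsimp simp: partitions_def remove1_insert_part)
  show "\<forall>a\<in>SIGMA lam:partitions N. set lam.
      (\<lambda>(k, mu). (insert_part k mu, k)) ((\<lambda>(lam, k). (k, remove1 k lam)) a) = a"
    by (clarsimp simp: partitions_def insert_part_remove1)
qed

lemma z_eq_prod_superset:
  assumes "finite S" "set lam \<subseteq> S"
  shows "z lam = (\<Prod>i\<in>S. i ^ count (mset lam) i * fact (count (mset lam) i))"
  unfolding z_def count_mset using assms
  by (intro prod.mono_neutral_left) (auto simp: count_list_0_iff)

lemma z_remove1:
  assumes "k \<in> set lam"
  shows "z lam = k * count_list lam k * z (remove1 k lam)"
proof -
  define c where "c = count (mset lam) k"
  define rest where
    "rest = (\<Prod>i\<in>set lam - {k}. i ^ count (mset lam) i * fact (count (mset lam) i))"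
  have "c \<ge> 1"
    using assms by (simp add: c_def Suc_le_eq)
  have "z lam = k ^ c * fact c * rest"
    using z_eq_prod_superset[of "set lam" lam] assms by (simp add: prod.remove c_def rest_def)
  moreover have "z (remove1 k lam) = k ^ (c - 1) * fact (c - 1) * rest"
    using z_eq_prod_superset[of "set lam" "remove1 k lam"] set_remove1_subset[of k lam] assms
    by (simp add: prod.remove c_def rest_def)
  moreover have "k ^ c * fact c = k * c * (k ^ (c - 1) * fact (c - 1))"
    using \<open>c \<ge> 1\<close> by (cases c) (auto simp: algebra_simps)
  ultimately show ?thesis
    by (simp add: c_def count_mset)
qed

lemma z_pos: "0 \<notin> set lam \<Longrightarrow> 0 < z lam"
  unfolding z_def by (rule prod_pos) (auto intro: gr0I)

definition Q_weight :: "nat list \<Rightarrow> F" where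
  "Q_weight lam = inverse (alpha ^ length lam) / of_nat (z lam)"

lemma Q_neg [simp]: "k < 0 \<Longrightarrow> Q k = 0"
  by (simp add: Q_def)

lemma Q_0 [simp]: "Q 0 = 1"
  by (simp add: Q_def)

lemma Q_of_nat: "Q (int N) = (\<Sum>lam\<in>partitions N. const (Q_weight lam) * p_part lam)"
  by (cases "N = 0") (simp_all add: Q_def Q_weight_def partitions_0 z_def p_part_def)

lemma Q_weight_remove1:
  assumes "0 \<notin> set lam" "k \<in> set lam"
  shows "Q_weight (remove1 k lam) = alpha * of_nat (k * count_list lam k) * Q_weight lam"
proof -
  have "0 < z (remove1 k lam)"
    using assms by (intro z_pos) (auto dest: subsetD[OF set_remove1_subset])
  moreover have "length lam = Suc (length (remove1 k lam))"
    using assms(2) by (simp add: length_remove1) (metis Suc_pred length_pos_if_in_set)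
  ultimately show ?thesis
    using z_remove1[OF assms(2)] z_pos[OF assms(1)] alpha_nonzero
    by (simp add: Q_weight_def of_nat_F_eq_0_iff field_simps)
qed

lemma p_part_remove1: "k \<in> set lam \<Longrightarrow> p_part lam = p k * p_part (remove1 k lam)"
  by (induction lam) (auto simp: p_part_def mult_ac)

lemma sum_remove1_Q_term:
  assumes "lam \<in> partitions N"
  shows "(\<Sum>k\<in>set lam. p k * (const (Q_weight (remove1 k lam)) * p_part (remove1 k lam)))
       = const (alpha * of_nat N) * (const (Q_weight lam) * p_part lam)"
proof -
  have pos: "0 \<notin> set lam" and N: "(\<Sum>k\<in>set lam. count_list lam k * k) = N"
    using assms sum_list_map_eq_sum_count[of "\<lambda>x. x" lam] by (simp_all add: partitions_iff)
  have "(\<Sum>k\<in>set lam. p k * (const (Q_weight (remove1 k lam)) * p_part (remove1 k lam)))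
      = (\<Sum>k\<in>set lam. const (alpha * of_nat (k * count_list lam k) * Q_weight lam) * p_part lam)"
    using pos by (intro sum.cong) (simp_all add: Q_weight_remove1 p_part_remove1[of _ lam] mult_ac)
  also have "\<dots> = const (\<Sum>k\<in>set lam. alpha * of_nat (k * count_list lam k) * Q_weight lam)
      * p_part lam"
    by (simp add: const_sum sum_distrib_right)
  also have "(\<Sum>k\<in>set lam. alpha * of_nat (k * count_list lam k) * Q_weight lam)
      = alpha * of_nat N * Q_weight lam"
    by (simp add: sum_distrib_left sum_distrib_right mult_ac flip: N)
  finally show ?thesis
    by (simp add: const_mult mult_ac)
qed

lemma Q_recurrence:
  "(\<Sum>k\<in>{1..N}. p k * Q (int N - int k)) = const (alpha * of_nat N) * Q (int N)"
proof -
  let ?term = "\<lambda>k mu. p k * (const (Q_weight mu) * p_part mu)"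
  have "(\<Sum>k\<in>{1..N}. p k * Q (int N - int k))
      = (\<Sum>k\<in>{1..N}. \<Sum>mu\<in>partitions (N - k). ?term k mu)"
    by (intro sum.cong refl) (simp add: Q_of_nat sum_distrib_left flip: of_nat_diff)
  also have "\<dots> = (\<Sum>(k, mu)\<in>(SIGMA k:{1..N}. partitions (N - k)). ?term k mu)"
    by (rule sum.Sigma) (simp_all add: finite_partitions)
  also have "\<dots> = (\<Sum>(lam, k)\<in>(SIGMA lam:partitions N. set lam). ?term k (remove1 k lam))"
    by (subst sum.reindex_bij_betw[OF bij_betw_insert_part, symmetric])
      (auto simp: partitions_iff remove1_insert_part intro!: sum.cong)
  also have "\<dots> = (\<Sum>lam\<in>partitions N. \<Sum>k\<in>set lam. ?term k (remove1 k lam))"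
    by (rule sum.Sigma[symmetric]) (simp_all add: finite_partitions)
  also have "\<dots> = (\<Sum>lam\<in>partitions N.
      const (alpha * of_nat N) * (const (Q_weight lam) * p_part lam))"
    by (intro sum.cong refl) (rule sum_remove1_Q_term)
  also have "\<dots> = const (alpha * of_nat N) * Q (int N)"
    by (simp add: Q_of_nat sum_distrib_left)
  finally show ?thesis .
qed

lemma Q_recurrence_int:
  assumes "a \<le> int K"
  shows "(\<Sum>k\<in>{1..K}. p k * Q (a - int k)) = const (alpha * of_int a) * Q a"
proof (cases "a < 0")
  case True
  then show ?thesis by simp
next
  case False
  then obtain N where a: "a = int N" and "N \<le> K"
    using assms nonneg_int_cases by (metis not_less of_nat_le_iff)
  then have "(\<Sum>k\<in>{1..K}. p k * Q (a - int k)) = (\<Sum>k\<in>{1..N}. p k * Q (a - int k))"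
    by (intro sum.mono_neutral_right) auto
  then show ?thesis
    using Q_recurrence[of N] a by simp
qed

definition A_box :: "int \<Rightarrow> int \<Rightarrow> nat \<Rightarrow> Lam" where
  "A_box a c K = (\<Sum>i\<in>{1..K}. \<Sum>j\<in>{1..K}. p (i + j) * Q (a - int i) * Q (c - int j))"

lemma A_eq_A_box:
  assumes "m \<le> K" "n \<le> K"
  shows "A m n = A_box (int m) (int n) K"
proof -
  have "A m n = (\<Sum>i\<in>{1..m}. \<Sum>j\<in>{1..K}. p (i + j) * Q (int m - int i) * Q (int n - int j))"
    unfolding A_def using assms by (intro sum.cong refl sum.mono_neutral_left) auto
  also have "\<dots> = A_box (int m) (int n) K"
    unfolding A_box_def using assms by (intro sum.mono_neutral_left) auto
  finally show ?thesis .
qed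

lemma A_box_0: "A_box a 0 K = 0"
  by (simp add: A_box_def)

lemma A_box_shift:
  assumes "a < int K" "c \<le> int K"
  shows "A_box a c K - A_box (a + 1) (c - 1) K =
    const (alpha * of_int (a + 1)) * Q (a + 1) * Q (c - 1) - const (alpha * of_int c) * Q a * Q c"
proof -
  define g where "g i j = p (i + j) * Q (a - int i) * Q (c - int j)" for i j
  define R where "R i = (\<Sum>j<K. g i (Suc j))" for i
  have shift: "(\<Sum>i\<in>{1..K}. f i) = (\<Sum>i<K. f (Suc i))" for f :: "nat \<Rightarrow> Lam"
    by (metis One_nat_def sum.atLeast1_atMost_eq)
  have box: "A_box a' c' K =
      (\<Sum>i<K. \<Sum>j<K. p (Suc i + Suc j) * Q (a' - int (Suc i)) * Q (c' - int (Suc j)))" for a' c'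
    unfolding A_box_def shift ..
  have shifted_row: "(\<Sum>j<K. g i (Suc (Suc j))) = R i - g i 1" for i
  proof -
    have "R i + g i (Suc K) = (\<Sum>j<Suc K. g i (Suc j))"
      by (simp add: R_def)
    also have "\<dots> = g i 1 + (\<Sum>j<K. g i (Suc (Suc j)))"
      by (subst sum.lessThan_Suc_shift) simp
    moreover have "g i (Suc K) = 0"
      using assms by (simp add: g_def)
    ultimately show ?thesis
      by (simp add: algebra_simps)
  qed
  have "A_box a c K = (\<Sum>i<K. R (Suc i))"
    unfolding box R_def g_def ..
  moreover have "A_box (a + 1) (c - 1) K = (\<Sum>i<K. \<Sum>j<K. g i (Suc (Suc j)))"
    unfolding box g_def by (simp add: algebra_simps)
  ultimately have "A_box a c K - A_box (a + 1) (c - 1) K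
      = (\<Sum>i<K. R (Suc i)) - (\<Sum>i<K. R i - g i 1)"
    by (simp add: shifted_row)
  also have "\<dots> = R K - R 0 + (\<Sum>i<K. g i 1)"
    by (simp add: sum_subtractf flip: sum_lessThan_telescope)
  also have "R K = 0"
    using assms by (simp add: R_def g_def)
  also have "R 0 = Q a * (\<Sum>j<K. p (Suc j) * Q (c - int (Suc j)))"
    by (simp add: R_def g_def sum_distrib_left mult_ac)
  also have "(\<Sum>j<K. p (Suc j) * Q (c - int (Suc j))) = const (alpha * of_int c) * Q c"
    using Q_recurrence_int[OF assms(2)] by (simp only: shift)
  also have "(\<Sum>i<K. g i 1) = Q (c - 1) * (\<Sum>i<K. p (Suc i) * Q (a + 1 - int (Suc i)))"
    by (simp add: g_def sum_distrib_left mult_ac)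
  also have "(\<Sum>i<K. p (Suc i) * Q (a + 1 - int (Suc i)))
      = const (alpha * of_int (a + 1)) * Q (a + 1)"
    using Q_recurrence_int[of "a + 1" K] assms(1) by (simp only: shift)
  finally show ?thesis
    by (simp add: mult_ac)
qed

lemma A_closed_form:
  "A m n = (\<Sum>r\<le>n. const ((of_nat (m + r) * (if r = 0 then 0 else 1) - of_nat (n - r)) * alpha)
      * (Q (int (m + r)) * Q (int (n - r))))"
proof -
  define W where "W r = A_box (int m + int r) (int n - int r) (m + n)" for r
  define f where "f r = Q (int (m + r)) * Q (int (n - r))" for r
  define up where "up r = const (of_nat (m + r) * (if r = 0 then 0 else 1) * alpha) * f r" for r
  define down where "down r = const (of_nat (n - r) * alpha) * f r" for r
  have step: "W r - W (Suc r) = up (Suc r) - down r" if "r < n" for r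
  proof -
    have "W r - W (Suc r) = const (alpha * of_int (int m + int r + 1)) * Q (int m + int r + 1)
        * Q (int n - int r - 1) - const (alpha * of_int (int n - int r)) * Q (int m + int r)
        * Q (int n - int r)"
      unfolding W_def using that A_box_shift[of "int m + int r" "m + n" "int n - int r"]
      by (simp add: algebra_simps)
    then show ?thesis
      using that by (simp add: up_def down_def f_def of_nat_diff algebra_simps)
  qed
  have "A m n = W 0 - W n"
    by (simp add: W_def A_eq_A_box A_box_0)
  also have "\<dots> = (\<Sum>r<n. W r - W (Suc r))"
    by (rule sum_lessThan_telescope'[symmetric])
  also have "\<dots> = (\<Sum>r<n. up (Suc r)) - (\<Sum>r<n. down r)"
    by (simp add: step sum_subtractf)
  also have "(\<Sum>r<n. up (Suc r)) = (\<Sum>r\<le>n. up r)"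
    by (simp add: sum.atMost_shift up_def add_ac)
  also have "(\<Sum>r<n. down r) = (\<Sum>r\<le>n. down r)"
    by (simp add: down_def lessThan_Suc_atMost[symmetric])
  also have "(\<Sum>r\<le>n. up r) - (\<Sum>r\<le>n. down r) = (\<Sum>r\<le>n. up r - down r)"
    by (simp add: sum_subtractf)
  finally show ?thesis
    by (simp add: up_def down_def f_def const_diff left_diff_distrib)
qed

definition two_part :: "nat \<Rightarrow> nat \<Rightarrow> nat list" where
  "two_part x y = (if y = 0 then [x] else [x, y])"

lemma q_two_part: "q (two_part x y) = Q (int x) * Q (int y)"
  by (simp add: two_part_def q_def)

lemma two_part_in_partitions: "y \<le> x \<Longrightarrow> 0 < x \<Longrightarrow> two_part x y \<in> partitions (x + y)"
  by (simp add: two_part_def partitions_iff)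

lemma dominates_two_part: "r \<le> n \<Longrightarrow> dominates (two_part (m + r) (n - r)) [m, n]"
  unfolding dominates_def two_part_def
  by (auto simp: less_Suc_eq_0_disj take_Cons' split: if_splits)

lemma b_two_part:
  assumes "r \<le> n"
  shows "b m n (two_part (m + r) (n - r)) =
    (of_nat (m + r) * (if r = 0 then 0 else 1) - of_nat (n - r)) * alpha"
  using dominates_two_part[OF assms, of m] by (simp add: b_def two_part_def Let_def)

lemma dominating_two_part:
  assumes "lam \<in> partitions (m + n)" "length lam \<le> 2" "dominates lam [m, n]" "0 < m + n"
  shows "\<exists>r\<le>n. lam = two_part (m + r) (n - r)"
proof -
  have pos: "0 \<notin> set lam" and sum: "sum_list lam = m + n"
    using assms(1) by (simp_all add: partitions_iff)
  have first: "sum_list (take 1 [m, n]) \<le> sum_list (take 1 lam)"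
    using assms(3) unfolding dominates_def by blast
  consider "lam = []" | x where "lam = [x]" | x y where "lam = [x, y]"
    using assms(2) by (cases lam rule: remdups_adj.cases) auto
  then show ?thesis
  proof cases
    case 1
    then show ?thesis using sum assms(4) by simp
  next
    case (2 x)
    then show ?thesis using sum by (intro exI[of _ n]) (simp add: two_part_def)
  next
    case (3 x y)
    then show ?thesis using sum pos first by (intro exI[of _ "x - m"]) (auto simp: two_part_def)
  qed
qed

lemma inj_on_two_part: "inj_on (\<lambda>r. two_part (m + r) (n - r)) R"
  by (rule inj_onI) (simp add: two_part_def split: if_splits)

lemma sum_b_q_two_part:
  assumes "n \<le> m" "0 < m"
  shows "(\<Sum>lam\<in>partitions (m + n). const (b m n lam) * q lam)
    = (\<Sum>r\<le>n. const (b m n (two_part (m + r) (n - r))) * q (two_part (m + r) (n - r)))"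
proof -
  let ?lam = "\<lambda>r. two_part (m + r) (n - r)"
  have "?lam r \<in> partitions (m + n)" if "r \<le> n" for r
    using two_part_in_partitions[of "n - r" "m + r"] that assms by simp
  then have "?lam ` {..n} \<subseteq> partitions (m + n)"
    by auto
  moreover have "b m n lam = 0" if "lam \<in> partitions (m + n) - ?lam ` {..n}" for lam
    using that dominating_two_part[of lam m n] assms by (auto simp: b_def)
  ultimately have "(\<Sum>lam\<in>partitions (m + n). const (b m n lam) * q lam)
      = (\<Sum>lam\<in>?lam ` {..n}. const (b m n lam) * q lam)"
    by (intro sum.mono_neutral_right finite_partitions) auto
  then show ?thesis
    by (simp add: sum.reindex inj_on_two_part)
qed

theorem lemma3p8:
  fixes m n :: nat
  assumes "1 \<le> n" and "n \<le> m"
  shows "A m n = (\<Sum>lam\<in>partitions (m + n). const (b m n lam) * q lam)"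
proof -
  have "(\<Sum>lam\<in>partitions (m + n). const (b m n lam) * q lam)
    = (\<Sum>r\<le>n. const (b m n (two_part (m + r) (n - r))) * q (two_part (m + r) (n - r)))"
    using assms by (intro sum_b_q_two_part) auto
  also have "\<dots> = (\<Sum>r\<le>n.
      const ((of_nat (m + r) * (if r = 0 then 0 else 1) - of_nat (n - r)) * alpha)
        * (Q (int (m + r)) * Q (int (n - r))))"
    by (intro sum.cong refl) (simp add: b_two_part q_two_part)
  finally show ?thesis
    by (simp add: A_closed_form)
qed

end
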